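(* Let $0<|p|<1$ and let $t_0,t_1,t_2,t_3,u_0,u_1,q$ be generic parameters with $t_0t_1t_2t_3u_0u_1=pq$, and $n\in\mathbb{Z}_{\geq0}$. Then: (1) as a function of $z$, $\tilde R_{n}(z;t_0:t_1,t_2,t_3;u_0,u_1;q;p)\in A(u_0;p,q)$; (2) $\tilde R_n$ is invariant under replacing $t_r\mapsto t_rp^{k_r}$ $(0\le r\le3)$ and $u_r\mapsto u_rp^{l_r}$ $(r=0,1)$ for integers $k_r,l_r$ with $\sum_r k_r+\sum_r l_r=0$; (3) $\tilde R_{n} (zp^{1/2} ;t_0p^{1/2}:t_1p^{-1/2},t_2p^{-1/2},t_3p^{-1/2};u_0p^{1/2},u_1p^{1/2};q;p) = \tilde R_{n} (z ;t_0:t_1,t_2,t_3;u_0,u_1;q;p)$; (4) $\tilde R_{n} (z; 1/t_0: 1/t_1,1/t_2,1/t_3;p/u_0,p/u_1;1/q;p) = \tilde R_{n} (z; t_0 : t_1,t_2,t_3;u_0,u_1;q;p)$.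
   Context: Notation: $\theta(x;p)=\prod_{r\ge0}(1-xp^r)(1-p^{r+1}/x)$ and $\theta(x;q;p)_k=\prod_{j=0}^{k-1}\theta(xq^j;p)$. These are written multiplicatively: several arguments separated by commas mean the product of the function over these arguments, and $x^{\pm1}$ inside an argument means the product over both signs, e.g. $\theta(a,bz^{\pm1};q;p)_k=\theta(a;q;p)_k\theta(bz;q;p)_k\theta(b/z;q;p)_k$. Define \[ \tilde R_{n}(z;t_0:t_1,t_2,t_3;u_0,u_1;q;p) = \sum_{k=0}^n \frac{\theta(\frac{qt_0}{u_0};q;p)_{2k}}{\theta(\frac{t_0}{u_0};q;p)_{2k}} \frac{\theta(\frac{t_0}{u_0}, \frac{pq^n}{u_0u_1},q^{-n}, t_0z^{\pm 1}, \frac{q}{u_0t_1}, \frac{q}{u_0t_2}, \frac{q}{u_0t_3};q;p)_k}{\theta(q,\frac{q^{1-n}t_0u_1}{p},\frac{q^{n+1}t_0}{u_0}, \frac{q}{u_0}z^{\pm 1}, t_0t_1,t_0t_2,t_0t_3;q;p)_k} q^{k}. \] A function $f:\mathbb{C}^*\to\mathbb{C}$ is symmetric if $f(z)=f(1/z)$ and $p$-abelian if $f(pz)=f(z)$. $A(u_0;p,q)$ is the space of meromorphic symmetric $p$-abelian functions $f$ such that $\theta(pq z^{\pm 1}/u_0;q;p)_{m} f(z)$ is holomorphic on $\mathbb{C}^*$ for some sufficiently large integer $m$ (depending on $f$); i.e. $f$ has at most simple poles, located only at $u_0q^{-l}p^k$ and $u_0^{-1}q^lp^k$ with $k\in\mathbb{Z}$,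 $1\le l\le m$. *)

theory Defs
  imports "HOL-Complex_Analysis.Complex_Analysis"
begin

definition theta :: "complex \<Rightarrow> complex \<Rightarrow> complex" where
  "theta x p = (\<Prod>r. (1 - x * p ^ r) * (1 - p ^ (r + 1) / x))"

definition ethq :: "complex \<Rightarrow> complex \<Rightarrow> complex \<Rightarrow> nat \<Rightarrow> complex" where
  "ethq x q p k = (\<Prod>j<k. theta (x * q ^ j) p)"

definition Rt :: "nat \<Rightarrow> complex \<Rightarrow> complex \<Rightarrow> complex \<Rightarrow> complex \<Rightarrow> complex
                   \<Rightarrow> complex \<Rightarrow> complex \<Rightarrow> complex \<Rightarrow> complex \<Rightarrow> complex" where
  "Rt n z t0 t1 t2 t3 u0 u1 q p =
     (\<Sum>k=0..n.
        ethq (q * t0 / u0) q p (2 * k) / ethq (t0 / u0) q p (2 * k) *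
        ((ethq (t0 / u0) q p k * ethq (p * q ^ n / (u0 * u1)) q p k * ethq (q powi (- int n)) q p k
          * ethq (t0 * z) q p k * ethq (t0 / z) q p k
          * ethq (q / (u0 * t1)) q p k * ethq (q / (u0 * t2)) q p k * ethq (q / (u0 * t3)) q p k)
        / (ethq q q p k * ethq (q powi (1 - int n) * t0 * u1 / p) q p k
          * ethq (q ^ (n + 1) * t0 / u0) q p k
          * ethq (q / u0 * z) q p k * ethq (q / u0 / z) q p k
          * ethq (t0 * t1) q p k * ethq (t0 * t2) q p k * ethq (t0 * t3) q p k))
        * q ^ k)"

text \<open>Genericity of the parameters: all nonzero and all z-independent denominators
  occurring in tilde R_n are nonzero (for every k <= n, implied by k = n).\<close>
definition generic_params :: "nat \<Rightarrow> complex \<Rightarrow> complex \<Rightarrow> complex \<Rightarrow> complex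
                   \<Rightarrow> complex \<Rightarrow> complex \<Rightarrow> complex \<Rightarrow> complex \<Rightarrow> bool" where
  "generic_params n t0 t1 t2 t3 u0 u1 q p \<longleftrightarrow>
     t0 \<noteq> 0 \<and> t1 \<noteq> 0 \<and> t2 \<noteq> 0 \<and> t3 \<noteq> 0 \<and> u0 \<noteq> 0 \<and> u1 \<noteq> 0 \<and> q \<noteq> 0 \<and>
     ethq (t0 / u0) q p (2 * n) \<noteq> 0 \<and>
     ethq q q p n * ethq (q powi (1 - int n) * t0 * u1 / p) q p n
       * ethq (q ^ (n + 1) * t0 / u0) q p n
       * ethq (t0 * t1) q p n * ethq (t0 * t2) q p n * ethq (t0 * t3) q p n \<noteq> 0"

definition regular_pt :: "nat \<Rightarrow> complex \<Rightarrow> complex \<Rightarrow> complex \<Rightarrow> complex \<Rightarrow> bool" where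
  "regular_pt n z u0 q p \<longleftrightarrow> z \<noteq> 0 \<and> ethq (q / u0 * z) q p n * ethq (q / u0 / z) q p n \<noteq> 0"

text \<open>Since f is a
  total function, the holomorphy condition is expressed by a holomorphic g on C^*
  agreeing with theta(pq z^{+-1}/u0;q;p)_m f(z) away from the (discrete) zeros of that
  theta product.\<close>
definition A_space :: "complex \<Rightarrow> complex \<Rightarrow> complex \<Rightarrow> (complex \<Rightarrow> complex) \<Rightarrow> bool" where
  "A_space u0 p q f \<longleftrightarrow>
     f meromorphic_on (- {0}) \<and>
     (\<forall>z. z \<noteq> 0 \<longrightarrow> f z = f (1 / z)) \<and>
     (\<forall>z. z \<noteq> 0 \<longrightarrow> f (p * z) = f z) \<and>
     (\<exists>m::nat. \<exists>g. g holomorphic_on (- {0}) \<and>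
        (\<forall>z. z \<noteq> 0 \<longrightarrow>
           ethq (p * q * z / u0) q p m * ethq (p * q / (z * u0)) q p m \<noteq> 0 \<longrightarrow>
           g z = ethq (p * q * z / u0) q p m * ethq (p * q / (z * u0)) q p m * f z))"

end

theory Submission
  imports Defs
begin

(*
  Everything follows from the quasi-periodicity of the modified theta function,
  theta(px;p) = -theta(x;p)/x, together with theta(p/x;p) = theta(x;p).  Under each of the
  substitutions in (2)-(4), and under z |-> pz, every elliptic shifted factorial in the k-th
  summand of R_n changes by an explicit monomial in the parameters, and the balancing
  condition t0 t1 t2 t3 u0 u1 = pq makes these monomials cancel termwise.  For (2) it suffices
  to treat five elementary moves, each multiplying one parameter by p and another by 1/p;
  these connect all six parameters.  In (1), symmetry in z is manifest, p-periodicity is the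
  move z |-> pz, and multiplying by theta(pq z^(+-1)/u0;q;p)_n, which by quasi-periodicity is a
  constant multiple of theta(q z^(+-1)/u0;q;p)_n, clears every z-dependent denominator.
*)

section \<open>The modified theta function\<close>

lemma theta_factor_minus_1_bound:
  fixes x p :: complex
  assumes "norm p < 1" "x \<noteq> 0"
  shows "norm ((1 - x * p ^ r) * (1 - p ^ (r + 1) / x) - 1) \<le> (norm x + 1 / norm x + 1) * norm p ^ r"
proof -
  have "(1 - x * p ^ r) * (1 - p ^ (r + 1) / x) - 1 = - (x * p ^ r) - p ^ (r + 1) / x + p ^ r * (p ^ r * p)"
    using assms(2) by (simp add: field_simps)
  also have "norm \<dots> \<le> norm (- (x * p ^ r) - p ^ (r + 1) / x) + norm (p ^ r * (p ^ r * p))"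
    by (rule norm_triangle_ineq)
  also have "\<dots> \<le> norm (x * p ^ r) + norm (p ^ (r + 1) / x) + norm (p ^ r * (p ^ r * p))"
    using norm_triangle_ineq4[of "- (x * p ^ r)"] by simp
  also have "\<dots> = norm x * norm p ^ r + norm p ^ (r + 1) / norm x + norm p ^ r * (norm p ^ r * norm p)"
    by (simp add: norm_mult norm_divide norm_power)
  also have "\<dots> \<le> norm x * norm p ^ r + norm p ^ r / norm x + norm p ^ r * 1"
  proof -
    have "norm p ^ (r + 1) \<le> norm p ^ r"
      using assms(1) by (intro power_decreasing) auto
    moreover have "norm p ^ r * norm p \<le> 1"
      using assms(1) by (intro mult_le_one power_le_one) auto
    ultimately show ?thesis
      by (intro add_mono mult_left_mono divide_right_mono) auto
  qed
  finally show ?thesis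
    by (simp add: algebra_simps)
qed

lemma convergent_prod_theta_factors:
  fixes x p :: complex
  assumes "norm p < 1" "x \<noteq> 0"
  shows "convergent_prod (\<lambda>r. (1 - x * p ^ r) * (1 - p ^ (r + 1) / x))"
proof -
  have "summable (\<lambda>r. norm ((1 - x * p ^ r) * (1 - p ^ (r + 1) / x) - 1))"
  proof (rule summable_comparison_test')
    show "summable (\<lambda>r. (norm x + 1 / norm x + 1) * norm p ^ r)"
      using assms(1) by (intro summable_mult summable_geometric) auto
  qed (use theta_factor_minus_1_bound[OF assms] in auto)
  then show ?thesis
    by (intro abs_convergent_prod_imp_convergent_prod) (simp add: abs_convergent_prod_conv_summable)
qed

lemma theta_partial_products_LIMSEQ:
  fixes x p :: complex
  assumes "norm p < 1" "x \<noteq> 0"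
  shows "(\<lambda>N. \<Prod>r<N. (1 - x * p ^ r) * (1 - p ^ (r + 1) / x)) \<longlonglongrightarrow> theta x p"
proof -
  have "(\<lambda>N. \<Prod>r<Suc N. (1 - x * p ^ r) * (1 - p ^ (r + 1) / x)) \<longlonglongrightarrow> theta x p"
    using convergent_prod_LIMSEQ[OF convergent_prod_theta_factors[OF assms]]
    by (simp add: theta_def lessThan_Suc_atMost)
  then show ?thesis
    by (rule LIMSEQ_imp_Suc)
qed

lemma theta_1_eq_0:
  fixes p :: complex
  assumes "norm p < 1"
  shows "theta 1 p = 0"
  unfolding theta_def
  by (rule has_prod_zeroI[where n = 0, OF convergent_prod_has_prod[OF convergent_prod_theta_factors]])
    (use assms in auto)

lemma theta_nome_div:
  fixes x p :: complex
  assumes "p \<noteq> 0" "x \<noteq> 0"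
  shows "theta (p / x) p = theta x p"
  unfolding theta_def
  by (rule arg_cong[where f = prodinf], rule ext) (use assms in \<open>simp add: field_simps\<close>)

lemma theta_partial_products_telescope:
  fixes x p :: complex
  assumes "p \<noteq> 0" "x \<noteq> 0"
  shows "(\<Prod>r<N. (1 - p * x * p ^ r) * (1 - p ^ (r + 1) / (p * x))) * ((1 - x) * (1 - p ^ N / x))
    = (\<Prod>r<N. (1 - x * p ^ r) * (1 - p ^ (r + 1) / x)) * ((1 - x * p ^ N) * (1 - 1 / x))"
proof (induction N)
  case (Suc N)
  have "(1 - p * x * p ^ N) * (1 - p ^ (N + 1) / (p * x)) = (1 - x * p ^ Suc N) * (1 - p ^ N / x)"
    "(1 - x * p ^ N) * (1 - p ^ (N + 1) / x) = (1 - x * p ^ N) * (1 - p ^ Suc N / x)"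
    using assms by (simp_all add: field_simps)
  then have "(\<Prod>r<Suc N. (1 - p * x * p ^ r) * (1 - p ^ (r + 1) / (p * x))) * ((1 - x) * (1 - p ^ Suc N / x))
      = ((\<Prod>r<N. (1 - p * x * p ^ r) * (1 - p ^ (r + 1) / (p * x))) * ((1 - x) * (1 - p ^ N / x)))
        * ((1 - x * p ^ Suc N) * (1 - p ^ Suc N / x))"
    "(\<Prod>r<Suc N. (1 - x * p ^ r) * (1 - p ^ (r + 1) / x)) * ((1 - x * p ^ Suc N) * (1 - 1 / x))
      = ((\<Prod>r<N. (1 - x * p ^ r) * (1 - p ^ (r + 1) / x)) * ((1 - x * p ^ N) * (1 - 1 / x)))
        * ((1 - x * p ^ Suc N) * (1 - p ^ Suc N / x))"
    by (simp_all only: prod.lessThan_Suc mult_ac)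
  then show ?case
    by (simp only: Suc.IH)
qed simp

text \<open>Both sides of the telescoping identity converge; the boundary factors at the far
  end tend to 1.\<close>
lemma theta_nome_mult:
  fixes x p :: complex
  assumes "norm p < 1" "p \<noteq> 0" "x \<noteq> 0"
  shows "theta (p * x) p = - theta x p / x"
proof (cases "x = 1")
  case True
  then show ?thesis
    using theta_1_eq_0[OF assms(1)] theta_nome_div[OF assms(2), of 1] by simp
next
  case False
  have pN: "(\<lambda>N. p ^ N) \<longlonglongrightarrow> 0"
    using assms(1) by (rule LIMSEQ_power_zero)
  have "(\<lambda>N. (\<Prod>r<N. (1 - p * x * p ^ r) * (1 - p ^ (r + 1) / (p * x))) * ((1 - x) * (1 - p ^ N / x)))
      \<longlonglongrightarrow> theta (p * x) p * ((1 - x) * (1 - 0 / x))"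
    using assms by (intro tendsto_intros theta_partial_products_LIMSEQ pN) auto
  moreover have "(\<lambda>N. (\<Prod>r<N. (1 - x * p ^ r) * (1 - p ^ (r + 1) / x)) * ((1 - x * p ^ N) * (1 - 1 / x)))
      \<longlonglongrightarrow> theta x p * ((1 - x * 0) * (1 - 1 / x))"
    using assms by (intro tendsto_intros theta_partial_products_LIMSEQ pN) auto
  ultimately have "theta (p * x) p * (1 - x) = theta x p * (1 - 1 / x)"
    using LIMSEQ_unique theta_partial_products_telescope[OF assms(2,3)] by fastforce
  also have "\<dots> = (1 - x) * (- theta x p / x)"
    using assms(3) by (simp add: field_simps)
  finally show ?thesis
    using False by (metis mult.commute mult_left_cancel right_minus_eq)
qed

lemma uniform_limit_theta_partial_products:
  fixes p :: complex and K :: "complex set"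
  assumes "norm p < 1" "compact K" "0 \<notin> K"
  shows "uniform_limit K (\<lambda>N x. \<Prod>r<N. (1 - x * p ^ r) * (1 - p ^ (r + 1) / x)) (\<lambda>x. theta x p) sequentially"
proof -
  obtain B where B: "\<And>x. x \<in> K \<Longrightarrow> norm x \<le> B"
    using compact_imp_bounded[OF assms(2)] bounded_iff by blast
  have "compact (inverse ` K)"
    using assms(3) by (intro compact_continuous_image assms(2) continuous_intros) auto
  then obtain B' where "\<And>y. y \<in> inverse ` K \<Longrightarrow> norm y \<le> B'"
    using compact_imp_bounded bounded_iff by metis
  then have B': "\<And>x. x \<in> K \<Longrightarrow> norm (inverse x) \<le> B'"
    by blast
  have "uniformly_convergent_on K (\<lambda>N x. \<Prod>r<N. (1 - x * p ^ r) * (1 - p ^ (r + 1) / x))"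
  proof (rule uniformly_convergent_on_prod')
    show "continuous_on K (\<lambda>x. (1 - x * p ^ r) * (1 - p ^ (r + 1) / x))" for r
      using assms(3) by (intro continuous_intros) auto
    show "uniformly_convergent_on K (\<lambda>N x. \<Sum>r<N. norm ((1 - x * p ^ r) * (1 - p ^ (r + 1) / x) - 1))"
    proof (rule Weierstrass_m_test')
      show "summable (\<lambda>r. (B + B' + 1) * norm p ^ r)"
        using assms(1) by (intro summable_mult summable_geometric) auto
      fix r x
      assume x: "x \<in> K"
      then have "x \<noteq> 0"
        using assms(3) by auto
      have "norm x + 1 / norm x + 1 \<le> B + B' + 1"
        using B[OF x] B'[OF x] by (simp add: norm_inverse divide_inverse)
      then have "(norm x + 1 / norm x + 1) * norm p ^ r \<le> (B + B' + 1) * norm p ^ r"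
        by (rule mult_right_mono) simp
      then show "norm (norm ((1 - x * p ^ r) * (1 - p ^ (r + 1) / x) - 1)) \<le> (B + B' + 1) * norm p ^ r"
        using theta_factor_minus_1_bound[OF assms(1) \<open>x \<noteq> 0\<close>, of r] by simp
    qed
  qed (fact assms(2))
  then obtain g where g: "uniform_limit K (\<lambda>N x. \<Prod>r<N. (1 - x * p ^ r) * (1 - p ^ (r + 1) / x)) g sequentially"
    by (auto simp: uniformly_convergent_on_def)
  have g_eq: "g x = theta x p" if "x \<in> K" for x
    using LIMSEQ_unique[OF tendsto_uniform_limitI[OF g that] theta_partial_products_LIMSEQ[OF assms(1)]]
      that assms(3) by auto
  show ?thesis
    by (rule uniform_limit_cong'[THEN iffD1, OF _ _ g]) (use g_eq in auto)
qed

lemma theta_holomorphic: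
  fixes p :: complex
  assumes "norm p < 1"
  shows "(\<lambda>x. theta x p) holomorphic_on - {0}"
proof (rule holomorphic_uniform_sequence[where f = "\<lambda>N x. \<Prod>r<N. (1 - x * p ^ r) * (1 - p ^ (r + 1) / x)"])
  show "(\<lambda>x. \<Prod>r<N. (1 - x * p ^ r) * (1 - p ^ (r + 1) / x)) holomorphic_on - {0}" for N
    by (intro holomorphic_intros) auto
  fix z :: complex
  assume "z \<in> - {0}"
  then have "0 < norm z / 2" "cball z (norm z / 2) \<subseteq> - {0}"
    by (auto simp: dist_norm)
  moreover have "uniform_limit (cball z (norm z / 2)) (\<lambda>N x. \<Prod>r<N. (1 - x * p ^ r) * (1 - p ^ (r + 1) / x)) (\<lambda>x. theta x p) sequentially"
    using \<open>z \<in> - {0}\<close> by (intro uniform_limit_theta_partial_products[OF assms]) auto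
  ultimately show "\<exists>d>0. cball z d \<subseteq> - {0} \<and>
      uniform_limit (cball z d) (\<lambda>N x. \<Prod>r<N. (1 - x * p ^ r) * (1 - p ^ (r + 1) / x)) (\<lambda>x. theta x p) sequentially"
    by blast
qed auto

section \<open>Elliptic shifted factorials under quasi-periodicity\<close>

locale theta_nome =
  fixes p :: complex
  assumes norm_nome_less_1: "norm p < 1" and nome_nonzero: "p \<noteq> 0"
begin

lemma theta_div_nome:
  assumes "w \<noteq> 0"
  shows "theta (w / p) p = - (w / p) * theta w p"
  using theta_nome_mult[OF norm_nome_less_1 nome_nonzero, of "w / p"] assms nome_nonzero by (simp add: field_simps)

lemma theta_inverse:
  assumes "w \<noteq> 0"
  shows "theta (1 / w) p = - theta w p / w"
  using theta_nome_div[OF nome_nonzero, of "p * w"] theta_nome_mult[OF norm_nome_less_1 nome_nonzero assms] assms nome_nonzero by simp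

lemma theta_inverse_nome:
  assumes "w \<noteq> 0"
  shows "theta (1 / (p * w)) p = theta w p / (p * w ^ 2)"
  using theta_inverse[of "p * w"] theta_nome_mult[OF norm_nome_less_1 nome_nonzero assms] assms nome_nonzero
  by (simp add: field_simps power2_eq_square)

lemma ethq_factorwise:
  assumes "\<And>j. j < k \<Longrightarrow> theta (\<phi> j) p = \<psi> j * theta (y * q ^ j) p"
  shows "(\<Prod>j<k. theta (\<phi> j) p) = (\<Prod>j<k. \<psi> j) * ethq y q p k"
proof -
  have "(\<Prod>j<k. theta (\<phi> j) p) = (\<Prod>j<k. \<psi> j * theta (y * q ^ j) p)"
    using assms by (intro prod.cong) auto
  then show ?thesis
    by (simp add: ethq_def prod.distrib)
qed

lemma ethq_mult_nome:
  assumes "x = p * y" "y \<noteq> 0" "q \<noteq> 0"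
  shows "ethq x q p k = (\<Prod>j<k. - 1 / (y * q ^ j)) * ethq y q p k"
proof -
  have "ethq x q p k = (\<Prod>j<k. theta (p * (y * q ^ j)) p)"
    by (simp add: ethq_def assms(1) power_one_over mult.assoc)
  also have "\<dots> = (\<Prod>j<k. - 1 / (y * q ^ j)) * ethq y q p k"
    using assms(2,3) by (intro ethq_factorwise) (simp add: theta_nome_mult[OF norm_nome_less_1 nome_nonzero])
  finally show ?thesis .
qed

lemma ethq_div_nome:
  assumes "x = y / p" "y \<noteq> 0" "q \<noteq> 0"
  shows "ethq x q p k = (\<Prod>j<k. - (y * q ^ j) / p) * ethq y q p k"
proof -
  have "ethq x q p k = (\<Prod>j<k. theta (y * q ^ j / p) p)"
    by (simp add: ethq_def assms(1) power_one_over mult.assoc)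
  also have "\<dots> = (\<Prod>j<k. - (y * q ^ j) / p) * ethq y q p k"
    using assms(2,3) by (intro ethq_factorwise) (simp add: theta_div_nome)
  finally show ?thesis .
qed

lemma ethq_inverse:
  assumes "x = 1 / y" "y \<noteq> 0" "q \<noteq> 0"
  shows "ethq x (1 / q) p k = (\<Prod>j<k. - 1 / (y * q ^ j)) * ethq y q p k"
proof -
  have "ethq x (1 / q) p k = (\<Prod>j<k. theta (1 / (y * q ^ j)) p)"
    by (simp add: ethq_def assms(1) power_one_over mult.assoc)
  also have "\<dots> = (\<Prod>j<k. - 1 / (y * q ^ j)) * ethq y q p k"
    using assms(2,3) by (intro ethq_factorwise) (simp add: theta_inverse)
  finally show ?thesis .
qed

lemma ethq_inverse_nome:
  assumes "x = 1 / (p * y)" "y \<noteq> 0" "q \<noteq> 0"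
  shows "ethq x (1 / q) p k = (\<Prod>j<k. 1 / (p * (y * q ^ j) ^ 2)) * ethq y q p k"
proof -
  have "ethq x (1 / q) p k = (\<Prod>j<k. theta (1 / (p * (y * q ^ j))) p)"
    by (simp add: ethq_def assms(1) power_one_over mult.assoc)
  also have "\<dots> = (\<Prod>j<k. 1 / (p * (y * q ^ j) ^ 2)) * ethq y q p k"
    using assms(2,3) by (intro ethq_factorwise) (simp add: theta_inverse_nome)
  finally show ?thesis .
qed

end

lemma ethq_eqI: "x = y \<Longrightarrow> ethq x q p k = (\<Prod>j<k. 1) * ethq y q p k"
  by simp

section \<open>Transformation of the summands\<close>

definition Rt_term :: "nat \<Rightarrow> complex \<Rightarrow> complex \<Rightarrow> complex \<Rightarrow> complex \<Rightarrow> complex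
                   \<Rightarrow> complex \<Rightarrow> complex \<Rightarrow> complex \<Rightarrow> complex \<Rightarrow> nat \<Rightarrow> complex" where
  "Rt_term n z t0 t1 t2 t3 u0 u1 q p k =
        ethq (q * t0 / u0) q p (2 * k) / ethq (t0 / u0) q p (2 * k) *
        ((ethq (t0 / u0) q p k * ethq (p * q ^ n / (u0 * u1)) q p k * ethq (q powi (- int n)) q p k
          * ethq (t0 * z) q p k * ethq (t0 / z) q p k
          * ethq (q / (u0 * t1)) q p k * ethq (q / (u0 * t2)) q p k * ethq (q / (u0 * t3)) q p k)
        / (ethq q q p k * ethq (q powi (1 - int n) * t0 * u1 / p) q p k
          * ethq (q ^ (n + 1) * t0 / u0) q p k
          * ethq (q / u0 * z) q p k * ethq (q / u0 / z) q p k
          * ethq (t0 * t1) q p k * ethq (t0 * t2) q p k * ethq (t0 * t3) q p k))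
        * q ^ k"

lemma Rt_eq_sum_Rt_term: "Rt n z t0 t1 t2 t3 u0 u1 q p = (\<Sum>k=0..n. Rt_term n z t0 t1 t2 t3 u0 u1 q p k)"
  unfolding Rt_def Rt_term_def ..

lemma Rt_term_shape_rescale:
  fixes A A' a B B' b r r' :: "'a :: field"
  assumes "A' = a * A" "B' = b * B"
    "N1' = c1 * N1" "N2' = c2 * N2" "N3' = c3 * N3" "N4' = c4 * N4"
    "N5' = c5 * N5" "N6' = c6 * N6" "N7' = c7 * N7" "N8' = c8 * N8"
    "D1' = d1 * D1" "D2' = d2 * D2" "D3' = d3 * D3" "D4' = d4 * D4"
    "D5' = d5 * D5" "D6' = d6 * D6" "D7' = d7 * D7" "D8' = d8 * D8"
    "a / b * ((c1*c2*c3*c4*c5*c6*c7*c8) / (d1*d2*d3*d4*d5*d6*d7*d8)) * r' = r"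
  shows "A' / B' * ((N1'*N2'*N3'*N4'*N5'*N6'*N7'*N8') / (D1'*D2'*D3'*D4'*D5'*D6'*D7'*D8')) * r'
       = A / B * ((N1*N2*N3*N4*N5*N6*N7*N8) / (D1*D2*D3*D4*D5*D6*D7*D8)) * r"
  unfolding assms(1-18) assms(19)[symmetric] by (simp add: divide_inverse inverse_mult_distrib ac_simps)

lemma prod_lessThan_double:
  fixes f :: "nat \<Rightarrow> 'a :: comm_monoid_mult"
  shows "(\<Prod>j<2 * k. f j) = (\<Prod>j<k. f (2 * j) * f (2 * j + 1))"
  by (induction k) (simp_all add: mult_ac)

lemma prod_mult_power_eq:
  fixes F :: "nat \<Rightarrow> 'a :: comm_monoid_mult"
  assumes "\<And>j. F j * s = t"
  shows "(\<Prod>j<k. F j) * s ^ k = t ^ k"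
proof -
  have "(\<Prod>j<k. F j) * s ^ k = (\<Prod>j<k. F j * s)"
    by (simp add: prod.distrib)
  then show ?thesis
    using assms by simp
qed

definition balanced_params :: "complex \<Rightarrow> complex \<Rightarrow> complex \<Rightarrow> complex \<Rightarrow> complex
                   \<Rightarrow> complex \<Rightarrow> complex \<Rightarrow> complex \<Rightarrow> bool" where
  "balanced_params t0 t1 t2 t3 u0 u1 q p \<longleftrightarrow>
     t0 \<noteq> 0 \<and> t1 \<noteq> 0 \<and> t2 \<noteq> 0 \<and> t3 \<noteq> 0 \<and> u0 \<noteq> 0 \<and> u1 \<noteq> 0 \<and> q \<noteq> 0 \<and>
     t0 * t1 * t2 * t3 * u0 * u1 = p * q"

lemma balanced_params_nonzero:
  "balanced_params t0 t1 t2 t3 u0 u1 q p \<Longrightarrow>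
    t0 \<noteq> 0 \<and> t1 \<noteq> 0 \<and> t2 \<noteq> 0 \<and> t3 \<noteq> 0 \<and> u0 \<noteq> 0 \<and> u1 \<noteq> 0 \<and> q \<noteq> 0"
  unfolding balanced_params_def by simp

text \<open>In each proof below, every elliptic shifted factorial of the transformed summand is
  matched with the corresponding one of the original summand up to a monomial factor
  (by quasi-periodicity); the final goal states that these monomials cancel.\<close>
lemma (in theta_nome) Rt_term_elementary_moves:
  assumes "balanced_params t0 t1 t2 t3 u0 u1 q p" "z \<noteq> 0"
  shows Rt_term_shift_t0_t1:
      "Rt_term n z (t0 * p) (t1 / p) t2 t3 u0 u1 q p k = Rt_term n z t0 t1 t2 t3 u0 u1 q p k"
    and Rt_term_shift_t1_u1:
      "Rt_term n z t0 (t1 / p) t2 t3 u0 (u1 * p) q p k = Rt_term n z t0 t1 t2 t3 u0 u1 q p k"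
    and Rt_term_shift_u0_u1:
      "Rt_term n z t0 t1 t2 t3 (u0 * p) (u1 / p) q p k = Rt_term n z t0 t1 t2 t3 u0 u1 q p k"
    and Rt_term_nome_periodic:
      "Rt_term n (p * z) t0 t1 t2 t3 u0 u1 q p k = Rt_term n z t0 t1 t2 t3 u0 u1 q p k"
  unfolding Rt_term_def
  by (rule Rt_term_shape_rescale,
      (rule ethq_eqI ethq_mult_nome ethq_div_nome;
        simp add: balanced_params_nonzero[OF assms(1)] assms(2) nome_nonzero; fail)+,
      simp only: prod_lessThan_double prod_dividef[symmetric] prod.distrib[symmetric],
      rule prod_mult_power_eq,
      use assms nome_nonzero in \<open>simp add: balanced_params_def power_int_diff power_int_minus
        field_simps flip: power_mult\<close>)+

lemma (in theta_nome) Rt_term_half_period: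
  assumes "balanced_params t0 t1 t2 t3 u0 u1 q p" "z \<noteq> 0" "s * s = p"
  shows "Rt_term n (z * s) (t0 * s) (t1 / s) (t2 / s) (t3 / s) (u0 * s) (u1 * s) q p k
    = Rt_term n z t0 t1 t2 t3 u0 u1 q p k"
proof -
  have "s \<noteq> 0"
    using assms(3) nome_nonzero by auto
  note nz = balanced_params_nonzero[OF assms(1)] assms(2) nome_nonzero \<open>s \<noteq> 0\<close>
  show ?thesis
    unfolding Rt_term_def
    apply (rule Rt_term_shape_rescale)
    apply (rule ethq_eqI ethq_mult_nome ethq_div_nome;
        simp add: nz power_int_diff power_int_minus field_simps flip: assms(3); fail)+
    apply (simp only: prod_lessThan_double prod_dividef[symmetric] prod.distrib[symmetric])
    apply (rule prod_mult_power_eq)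
    using assms(1) nz
    by (simp add: balanced_params_def power_int_diff power_int_minus field_simps flip: power_mult)
qed

lemma Rt_term_inverse_z: "Rt_term n (1 / z) t0 t1 t2 t3 u0 u1 q p k = Rt_term n z t0 t1 t2 t3 u0 u1 q p k"
  unfolding Rt_term_def by (simp add: ac_simps)

lemma (in theta_nome) Rt_term_inversion:
  assumes "balanced_params t0 t1 t2 t3 u0 u1 q p" "z \<noteq> 0"
  shows "Rt_term n z (1 / t0) (1 / t1) (1 / t2) (1 / t3) (p / u0) (p / u1) (1 / q) p k
    = Rt_term n (1 / z) t0 t1 t2 t3 u0 u1 q p k"
proof -
  note nz = balanced_params_nonzero[OF assms(1)] assms(2) nome_nonzero
  have t3_eq: "t3 = p * q / (t0 * t1 * t2 * u0 * u1)"
    using assms(1) unfolding balanced_params_def by (auto simp: field_simps)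
  show ?thesis
    unfolding Rt_term_def
    apply (rule Rt_term_shape_rescale)
    apply (rule ethq_inverse ethq_inverse_nome;
        simp add: nz power_int_diff power_int_minus power_one_over field_simps; fail)+
    apply (simp only: prod_lessThan_double prod_dividef[symmetric] prod.distrib[symmetric])
    apply (rule prod_mult_power_eq)
    using nz by (simp add: t3_eq power_int_diff power_int_minus field_simps flip: power_mult)
qed

section \<open>Symmetries of the sum\<close>

lemma balanced_params_swap_t1_t2:
  "balanced_params t0 t1 t2 t3 u0 u1 q p \<Longrightarrow> balanced_params t0 t2 t1 t3 u0 u1 q p"
  unfolding balanced_params_def by (simp add: ac_simps)

lemma balanced_params_swap_t1_t3:
  "balanced_params t0 t1 t2 t3 u0 u1 q p \<Longrightarrow> balanced_params t0 t3 t2 t1 u0 u1 q p"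
  unfolding balanced_params_def by (simp add: ac_simps)

lemma balanced_params_powi_shift:
  assumes "balanced_params t0 t1 t2 t3 u0 u1 q p" "p \<noteq> 0" "k0 + k1 + k2 + k3 + l0 + l1 = 0"
  shows "balanced_params (t0 * p powi k0) (t1 * p powi k1) (t2 * p powi k2) (t3 * p powi k3)
    (u0 * p powi l0) (u1 * p powi l1) q p"
proof -
  have "(t0 * p powi k0) * (t1 * p powi k1) * (t2 * p powi k2) * (t3 * p powi k3) * (u0 * p powi l0) * (u1 * p powi l1)
      = (t0 * t1 * t2 * t3 * u0 * u1) * p powi (k0 + k1 + k2 + k3 + l0 + l1)"
    using assms(2) by (simp add: power_int_add ac_simps)
  then show ?thesis
    using assms unfolding balanced_params_def by simp
qed

lemma int_pair_transfer:
  fixes G :: "int \<Rightarrow> int \<Rightarrow> 'a"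
  assumes "\<And>c d. c + d = s \<Longrightarrow> G (c + 1) (d - 1) = G c d" and "c + d = s"
  shows "G c d = G s 0"
proof -
  have "G c (s - c) = G s (s - s)"
  proof (induction c rule: int_induct[where k = s])
    case (step1 i)
    then show ?case
      using assms(1)[of i "s - i"] by (simp add: algebra_simps)
  next
    case (step2 i)
    then show ?case
      using assms(1)[of "i - 1" "s - i + 1"] by (simp add: algebra_simps)
  qed simp
  then show ?thesis
    using assms(2) by (metis add_diff_cancel_left' diff_self)
qed

lemma Rt_swap_t1_t2: "Rt n z t0 t1 t2 t3 u0 u1 q p = Rt n z t0 t2 t1 t3 u0 u1 q p"
  unfolding Rt_def by (simp add: ac_simps)

lemma Rt_swap_t1_t3: "Rt n z t0 t1 t2 t3 u0 u1 q p = Rt n z t0 t3 t2 t1 u0 u1 q p"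
  unfolding Rt_def by (simp add: ac_simps)

lemma Rt_inverse_z: "Rt n (1 / z) t0 t1 t2 t3 u0 u1 q p = Rt n z t0 t1 t2 t3 u0 u1 q p"
  unfolding Rt_eq_sum_Rt_term by (simp add: Rt_term_inverse_z)

context theta_nome
begin

lemma Rt_shift_t0_t1:
  "balanced_params t0 t1 t2 t3 u0 u1 q p \<Longrightarrow> z \<noteq> 0 \<Longrightarrow>
    Rt n z (t0 * p) (t1 / p) t2 t3 u0 u1 q p = Rt n z t0 t1 t2 t3 u0 u1 q p"
  unfolding Rt_eq_sum_Rt_term by (simp add: Rt_term_shift_t0_t1)

lemma Rt_shift_t0_t2:
  "balanced_params t0 t1 t2 t3 u0 u1 q p \<Longrightarrow> z \<noteq> 0 \<Longrightarrow>
    Rt n z (t0 * p) t1 (t2 / p) t3 u0 u1 q p = Rt n z t0 t1 t2 t3 u0 u1 q p"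
  using Rt_shift_t0_t1[OF balanced_params_swap_t1_t2] by (metis Rt_swap_t1_t2)

lemma Rt_shift_t0_t3:
  "balanced_params t0 t1 t2 t3 u0 u1 q p \<Longrightarrow> z \<noteq> 0 \<Longrightarrow>
    Rt n z (t0 * p) t1 t2 (t3 / p) u0 u1 q p = Rt n z t0 t1 t2 t3 u0 u1 q p"
  using Rt_shift_t0_t1[OF balanced_params_swap_t1_t3] by (metis Rt_swap_t1_t3)

lemma Rt_shift_t1_u1:
  "balanced_params t0 t1 t2 t3 u0 u1 q p \<Longrightarrow> z \<noteq> 0 \<Longrightarrow>
    Rt n z t0 (t1 / p) t2 t3 u0 (u1 * p) q p = Rt n z t0 t1 t2 t3 u0 u1 q p"
  unfolding Rt_eq_sum_Rt_term by (simp add: Rt_term_shift_t1_u1)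

lemma Rt_shift_u0_u1:
  "balanced_params t0 t1 t2 t3 u0 u1 q p \<Longrightarrow> z \<noteq> 0 \<Longrightarrow>
    Rt n z t0 t1 t2 t3 (u0 * p) (u1 / p) q p = Rt n z t0 t1 t2 t3 u0 u1 q p"
  unfolding Rt_eq_sum_Rt_term by (simp add: Rt_term_shift_u0_u1)

lemma Rt_half_period:
  "balanced_params t0 t1 t2 t3 u0 u1 q p \<Longrightarrow> z \<noteq> 0 \<Longrightarrow> s\<^sup>2 = p \<Longrightarrow>
    Rt n (z * s) (t0 * s) (t1 / s) (t2 / s) (t3 / s) (u0 * s) (u1 * s) q p = Rt n z t0 t1 t2 t3 u0 u1 q p"
  unfolding Rt_eq_sum_Rt_term by (simp add: Rt_term_half_period power2_eq_square)

lemma Rt_inversion: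
  "balanced_params t0 t1 t2 t3 u0 u1 q p \<Longrightarrow> z \<noteq> 0 \<Longrightarrow>
    Rt n z (1 / t0) (1 / t1) (1 / t2) (1 / t3) (p / u0) (p / u1) (1 / q) p = Rt n z t0 t1 t2 t3 u0 u1 q p"
  unfolding Rt_eq_sum_Rt_term by (simp add: Rt_term_inversion Rt_term_inverse_z)

lemma Rt_nome_periodic:
  "balanced_params t0 t1 t2 t3 u0 u1 q p \<Longrightarrow> z \<noteq> 0 \<Longrightarrow>
    Rt n (p * z) t0 t1 t2 t3 u0 u1 q p = Rt n z t0 t1 t2 t3 u0 u1 q p"
  unfolding Rt_eq_sum_Rt_term by (simp add: Rt_term_nome_periodic)

lemma mult_powi_succ: "x * p powi (k + 1) = x * p powi k * p"
  and mult_powi_pred: "x * p powi (k - 1) = x * p powi k / p"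
  using nome_nonzero by (simp_all add: power_int_add power_int_diff)

definition Rt_shifted :: "nat \<Rightarrow> complex \<Rightarrow> complex \<Rightarrow> complex \<Rightarrow> complex \<Rightarrow> complex \<Rightarrow> complex
    \<Rightarrow> complex \<Rightarrow> complex \<Rightarrow> int \<Rightarrow> int \<Rightarrow> int \<Rightarrow> int \<Rightarrow> int \<Rightarrow> int \<Rightarrow> complex" where
  "Rt_shifted n z t0 t1 t2 t3 u0 u1 q k0 k1 k2 k3 l0 l1 = Rt n z (t0 * p powi k0) (t1 * p powi k1)
     (t2 * p powi k2) (t3 * p powi k3) (u0 * p powi l0) (u1 * p powi l1) q p"

context
  fixes n :: nat and z t0 t1 t2 t3 u0 u1 q :: complex
  assumes bal: "balanced_params t0 t1 t2 t3 u0 u1 q p" and z: "z \<noteq> 0"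
begin

private abbreviation "R \<equiv> Rt_shifted n z t0 t1 t2 t3 u0 u1 q"

private lemma shifted: "k0 + k1 + k2 + k3 + l0 + l1 = 0 \<Longrightarrow> balanced_params (t0 * p powi k0)
    (t1 * p powi k1) (t2 * p powi k2) (t3 * p powi k3) (u0 * p powi l0) (u1 * p powi l1) q p"
  by (rule balanced_params_powi_shift[OF bal nome_nonzero])

lemma Rt_shifted_step_u0_u1:
  "k0 + k1 + k2 + k3 + l0 + l1 = 0 \<Longrightarrow> R k0 k1 k2 k3 (l0 - 1) (l1 + 1) = R k0 k1 k2 k3 l0 l1"
  using Rt_shift_u0_u1[OF shifted[of k0 k1 k2 k3 "l0 - 1" "l1 + 1"] z]
  by (simp add: Rt_shifted_def mult_powi_succ mult_powi_pred nome_nonzero)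

lemma Rt_shifted_step_t1_u1:
  "k0 + k1 + k2 + k3 + l0 + l1 = 0 \<Longrightarrow> R k0 (k1 + 1) k2 k3 l0 (l1 - 1) = R k0 k1 k2 k3 l0 l1"
  using Rt_shift_t1_u1[OF shifted[of k0 "k1 + 1" k2 k3 l0 "l1 - 1"] z]
  by (simp add: Rt_shifted_def mult_powi_succ mult_powi_pred nome_nonzero)

lemma Rt_shifted_step_t0_t1:
  "k0 + k1 + k2 + k3 + l0 + l1 = 0 \<Longrightarrow> R (k0 + 1) (k1 - 1) k2 k3 l0 l1 = R k0 k1 k2 k3 l0 l1"
  using Rt_shift_t0_t1[OF shifted z] by (simp add: Rt_shifted_def mult_powi_succ mult_powi_pred)

lemma Rt_shifted_step_t0_t2:
  "k0 + k1 + k2 + k3 + l0 + l1 = 0 \<Longrightarrow> R (k0 + 1) k1 (k2 - 1) k3 l0 l1 = R k0 k1 k2 k3 l0 l1"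
  using Rt_shift_t0_t2[OF shifted z] by (simp add: Rt_shifted_def mult_powi_succ mult_powi_pred)

lemma Rt_shifted_step_t0_t3:
  "k0 + k1 + k2 + k3 + l0 + l1 = 0 \<Longrightarrow> R (k0 + 1) k1 k2 (k3 - 1) l0 l1 = R k0 k1 k2 k3 l0 l1"
  using Rt_shift_t0_t3[OF shifted z] by (simp add: Rt_shifted_def mult_powi_succ mult_powi_pred)

text \<open>The five elementary moves connect all six parameters, so the exponents can be
  collected one after another into that of t0, where they sum to zero.\<close>
lemma Rt_lattice_shift:
  assumes "k0 + k1 + k2 + k3 + l0 + l1 = 0"
  shows "Rt n z (t0 * p powi k0) (t1 * p powi k1) (t2 * p powi k2) (t3 * p powi k3)
      (u0 * p powi l0) (u1 * p powi l1) q p = Rt n z t0 t1 t2 t3 u0 u1 q p"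
proof -
  have "R k0 k1 k2 k3 l0 l1 = R k0 k1 k2 k3 0 (l0 + l1)"
    by (rule int_pair_transfer[where G = "\<lambda>c d. R k0 k1 k2 k3 d c"])
      (use assms in \<open>auto intro!: Rt_shifted_step_u0_u1\<close>)
  also have "\<dots> = R k0 (k1 + l0 + l1) k2 k3 0 0"
    by (rule int_pair_transfer[where G = "\<lambda>c d. R k0 c k2 k3 0 d"])
      (use assms in \<open>auto intro!: Rt_shifted_step_t1_u1\<close>)
  also have "\<dots> = R (k0 + k1 + l0 + l1) 0 k2 k3 0 0"
    by (rule int_pair_transfer[where G = "\<lambda>c d. R c d k2 k3 0 0"])
      (use assms in \<open>auto intro!: Rt_shifted_step_t0_t1\<close>)
  also have "\<dots> = R (k0 + k1 + k2 + l0 + l1) 0 0 k3 0 0"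
    by (rule int_pair_transfer[where G = "\<lambda>c d. R c 0 d k3 0 0"])
      (use assms in \<open>auto intro!: Rt_shifted_step_t0_t2\<close>)
  also have "\<dots> = R 0 0 0 0 0 0"
    by (rule int_pair_transfer[where G = "\<lambda>c d. R c 0 0 d 0 0"])
      (use assms in \<open>auto intro!: Rt_shifted_step_t0_t3\<close>)
  finally show ?thesis
    by (simp add: Rt_shifted_def)
qed

end

end

section \<open>Poles\<close>

lemma ethq_split:
  "k \<le> n \<Longrightarrow> ethq x q p n = ethq x q p k * (\<Prod>j\<in>{k..<n}. theta (x * q ^ j) p)"
  unfolding ethq_def lessThan_atLeast0 by (simp add: prod.atLeastLessThan_concat)

definition Rt_coeff :: "nat \<Rightarrow> complex \<Rightarrow> complex \<Rightarrow> complex \<Rightarrow> complex \<Rightarrow> complex \<Rightarrow> complex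
    \<Rightarrow> complex \<Rightarrow> complex \<Rightarrow> nat \<Rightarrow> complex" where
  "Rt_coeff n t0 t1 t2 t3 u0 u1 q p k =
     ethq (q * t0 / u0) q p (2 * k) / ethq (t0 / u0) q p (2 * k) *
     ((ethq (t0 / u0) q p k * ethq (p * q ^ n / (u0 * u1)) q p k * ethq (q powi (- int n)) q p k
       * ethq (q / (u0 * t1)) q p k * ethq (q / (u0 * t2)) q p k * ethq (q / (u0 * t3)) q p k)
     / (ethq q q p k * ethq (q powi (1 - int n) * t0 * u1 / p) q p k * ethq (q ^ (n + 1) * t0 / u0) q p k
       * ethq (t0 * t1) q p k * ethq (t0 * t2) q p k * ethq (t0 * t3) q p k)) * q ^ k"

lemma Rt_term_eq_Rt_coeff:
  "Rt_term n z t0 t1 t2 t3 u0 u1 q p k = Rt_coeff n t0 t1 t2 t3 u0 u1 q p k *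
     ((ethq (t0 * z) q p k * ethq (t0 / z) q p k) / (ethq (q / u0 * z) q p k * ethq (q / u0 / z) q p k))"
  unfolding Rt_term_def Rt_coeff_def by (simp add: divide_inverse inverse_mult_distrib ac_simps)

lemma Rt_term_times_denominator:
  assumes "k \<le> n" "ethq (q / u0 * z) q p n * ethq (q / u0 / z) q p n \<noteq> 0"
  shows "ethq (q / u0 * z) q p n * ethq (q / u0 / z) q p n * Rt_term n z t0 t1 t2 t3 u0 u1 q p k
    = Rt_coeff n t0 t1 t2 t3 u0 u1 q p k * (ethq (t0 * z) q p k * ethq (t0 / z) q p k)
      * (\<Prod>j\<in>{k..<n}. theta (q / u0 * z * q ^ j) p * theta (q / u0 / z * q ^ j) p)"
proof -
  define A B where "A = ethq (q / u0 * z) q p k" and "B = ethq (q / u0 / z) q p k"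
  define TA TB where "TA = (\<Prod>j\<in>{k..<n}. theta (q / u0 * z * q ^ j) p)"
    and "TB = (\<Prod>j\<in>{k..<n}. theta (q / u0 / z * q ^ j) p)"
  have "ethq (q / u0 * z) q p n = A * TA" "ethq (q / u0 / z) q p n = B * TB"
    unfolding A_def B_def TA_def TB_def by (simp_all add: ethq_split[OF assms(1)])
  moreover have "(\<Prod>j\<in>{k..<n}. theta (q / u0 * z * q ^ j) p * theta (q / u0 / z * q ^ j) p) = TA * TB"
    unfolding TA_def TB_def by (rule prod.distrib)
  ultimately show ?thesis
    using assms(2) unfolding Rt_term_eq_Rt_coeff A_def[symmetric] B_def[symmetric]
    by (simp add: field_simps)
qed

context theta_nome
begin

lemma theta_holomorphic_comp:
  assumes "h holomorphic_on A" "\<And>z. z \<in> A \<Longrightarrow> h z \<noteq> 0"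
  shows "(\<lambda>z. theta (h z) p) holomorphic_on A"
proof -
  have "((\<lambda>x. theta x p) \<circ> h) holomorphic_on A"
    using assms(2) by (intro holomorphic_on_compose_gen[OF assms(1) theta_holomorphic[OF norm_nome_less_1]]) auto
  then show ?thesis
    by (simp add: o_def)
qed

lemma ethq_holomorphic_comp:
  assumes "h holomorphic_on A" "\<And>z. z \<in> A \<Longrightarrow> h z \<noteq> 0" "q \<noteq> 0"
  shows "(\<lambda>z. ethq (h z) q p k) holomorphic_on A"
  unfolding ethq_def using assms
  by (intro holomorphic_on_prod theta_holomorphic_comp holomorphic_intros) auto

lemma Rt_meromorphic:
  assumes "t0 \<noteq> 0" "u0 \<noteq> 0" "q \<noteq> 0"
  shows "(\<lambda>z. Rt n z t0 t1 t2 t3 u0 u1 q p) meromorphic_on - {0}"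
proof -
  have ethq_meromorphic: "(\<lambda>z. ethq (h z) q p k) meromorphic_on - {0}"
    if "h holomorphic_on - {0}" "\<And>z. z \<noteq> 0 \<Longrightarrow> h z \<noteq> 0" for h k
    by (rule analytic_on_imp_meromorphic_on, subst analytic_on_open)
      (auto intro!: ethq_holomorphic_comp that assms(3))
  then show ?thesis
    unfolding Rt_eq_sum_Rt_term Rt_term_def using assms
    by (intro meromorphic_intros ethq_meromorphic holomorphic_intros) auto
qed

lemma ethq_shifted_poles:
  assumes "u0 \<noteq> 0" "q \<noteq> 0"
  obtains C where "\<And>z. z \<noteq> 0 \<Longrightarrow> ethq (p * q * z / u0) q p m * ethq (p * q / (z * u0)) q p m
    = C * (ethq (q / u0 * z) q p m * ethq (q / u0 / z) q p m)"
proof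
  fix z :: complex
  assume "z \<noteq> 0"
  have "ethq (p * q * z / u0) q p m = (\<Prod>j<m. - 1 / (q / u0 * z * q ^ j)) * ethq (q / u0 * z) q p m"
    by (rule ethq_mult_nome) (use assms \<open>z \<noteq> 0\<close> in auto)
  moreover have "ethq (p * q / (z * u0)) q p m = (\<Prod>j<m. - 1 / (q / u0 / z * q ^ j)) * ethq (q / u0 / z) q p m"
    by (rule ethq_mult_nome) (use assms \<open>z \<noteq> 0\<close> in auto)
  moreover have "(\<Prod>j<m. - 1 / (q / u0 * z * q ^ j)) * (\<Prod>j<m. - 1 / (q / u0 / z * q ^ j))
      = (\<Prod>j<m. u0 ^ 2 / (q ^ 2 * (q ^ j) ^ 2))"
    unfolding prod.distrib[symmetric] using assms \<open>z \<noteq> 0\<close>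
    by (intro prod.cong refl) (simp add: field_simps power2_eq_square)
  ultimately show "ethq (p * q * z / u0) q p m * ethq (p * q / (z * u0)) q p m
    = (\<Prod>j<m. u0 ^ 2 / (q ^ 2 * (q ^ j) ^ 2)) * (ethq (q / u0 * z) q p m * ethq (q / u0 / z) q p m)"
    by (simp add: ac_simps)
qed

lemma Rt_pole_cancellation:
  assumes "t0 \<noteq> 0" "u0 \<noteq> 0" "q \<noteq> 0"
  shows "\<exists>g. g holomorphic_on - {0} \<and> (\<forall>z. z \<noteq> 0 \<longrightarrow>
    ethq (p * q * z / u0) q p n * ethq (p * q / (z * u0)) q p n \<noteq> 0 \<longrightarrow>
    g z = ethq (p * q * z / u0) q p n * ethq (p * q / (z * u0)) q p n * Rt n z t0 t1 t2 t3 u0 u1 q p)"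
proof -
  obtain C where C: "\<And>z. z \<noteq> 0 \<Longrightarrow> ethq (p * q * z / u0) q p n * ethq (p * q / (z * u0)) q p n
    = C * (ethq (q / u0 * z) q p n * ethq (q / u0 / z) q p n)"
    using ethq_shifted_poles assms(2,3) by blast
  define g where "g z = C * (\<Sum>k=0..n. Rt_coeff n t0 t1 t2 t3 u0 u1 q p k * (ethq (t0 * z) q p k * ethq (t0 / z) q p k)
    * (\<Prod>j\<in>{k..<n}. theta (q / u0 * z * q ^ j) p * theta (q / u0 / z * q ^ j) p))" for z
  have "g holomorphic_on - {0}"
    unfolding g_def using assms
    by (intro holomorphic_intros ethq_holomorphic_comp theta_holomorphic_comp) auto
  moreover have "g z = ethq (p * q * z / u0) q p n * ethq (p * q / (z * u0)) q p n * Rt n z t0 t1 t2 t3 u0 u1 q p"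
    if "z \<noteq> 0" "ethq (p * q * z / u0) q p n * ethq (p * q / (z * u0)) q p n \<noteq> 0" for z
  proof -
    have D: "ethq (q / u0 * z) q p n * ethq (q / u0 / z) q p n \<noteq> 0"
      using that C[OF that(1)] by simp
    have "ethq (p * q * z / u0) q p n * ethq (p * q / (z * u0)) q p n * Rt n z t0 t1 t2 t3 u0 u1 q p
      = C * (\<Sum>k=0..n. ethq (q / u0 * z) q p n * ethq (q / u0 / z) q p n * Rt_term n z t0 t1 t2 t3 u0 u1 q p k)"
      unfolding C[OF that(1)] Rt_eq_sum_Rt_term sum_distrib_left by (simp add: ac_simps)
    also have "\<dots> = g z"
      unfolding g_def
      by (rule arg_cong[where f = "(*) C"], rule sum.cong[OF refl], rule Rt_term_times_denominator)
        (use D in auto)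
    finally show ?thesis ..
  qed
  ultimately show ?thesis
    by blast
qed

end

theorem lemma3p2:
  fixes p q t0 t1 t2 t3 u0 u1 :: complex and n :: nat
  assumes "0 < norm p" and "norm p < 1"
    and "t0 * t1 * t2 * t3 * u0 * u1 = p * q"
    and "generic_params n t0 t1 t2 t3 u0 u1 q p"
  shows "A_space u0 p q (\<lambda>z. Rt n z t0 t1 t2 t3 u0 u1 q p)
    \<and> (\<forall>k0 k1 k2 k3 l0 l1 :: int. k0 + k1 + k2 + k3 + l0 + l1 = 0 \<longrightarrow>
         (\<forall>z. regular_pt n z u0 q p \<longrightarrow>
            Rt n z (t0 * p powi k0) (t1 * p powi k1) (t2 * p powi k2) (t3 * p powi k3)
                   (u0 * p powi l0) (u1 * p powi l1) q p
            = Rt n z t0 t1 t2 t3 u0 u1 q p))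
    \<and> (\<forall>s z. s\<^sup>2 = p \<longrightarrow> regular_pt n z u0 q p \<longrightarrow>
            Rt n (z * s) (t0 * s) (t1 / s) (t2 / s) (t3 / s) (u0 * s) (u1 * s) q p
            = Rt n z t0 t1 t2 t3 u0 u1 q p)
    \<and> (\<forall>z. regular_pt n z u0 q p \<longrightarrow>
            Rt n z (1 / t0) (1 / t1) (1 / t2) (1 / t3) (p / u0) (p / u1) (1 / q) p
            = Rt n z t0 t1 t2 t3 u0 u1 q p)"
proof -
  interpret theta_nome p
    using assms(1,2) by unfold_locales auto
  have nz: "t0 \<noteq> 0" "u0 \<noteq> 0" "q \<noteq> 0"
    using assms(4) unfolding generic_params_def by auto
  have bal: "balanced_params t0 t1 t2 t3 u0 u1 q p"
    using assms(3,4) unfolding generic_params_def balanced_params_def by auto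
  have "\<exists>m g. g holomorphic_on - {0} \<and> (\<forall>z. z \<noteq> 0 \<longrightarrow>
      ethq (p * q * z / u0) q p m * ethq (p * q / (z * u0)) q p m \<noteq> 0 \<longrightarrow>
      g z = ethq (p * q * z / u0) q p m * ethq (p * q / (z * u0)) q p m * Rt n z t0 t1 t2 t3 u0 u1 q p)"
    by (rule exI[of _ n]) (rule Rt_pole_cancellation[OF nz])
  then have "A_space u0 p q (\<lambda>z. Rt n z t0 t1 t2 t3 u0 u1 q p)"
    unfolding A_space_def using Rt_meromorphic[OF nz]
    by (simp add: Rt_inverse_z Rt_nome_periodic[OF bal])
  then show ?thesis
    using Rt_lattice_shift[OF bal] Rt_half_period[OF bal] Rt_inversion[OF bal]
    unfolding regular_pt_def by auto
qed

end
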